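(* Let $K\ge 2$, $i\in[K]$, and let $(G_{ij})_{j\in[K]\setminus\{i\}}$ be integrable real random variables on a probability space, with $G:=\min_{j\ne i}G_{ij}$. Let $L\ge 1$ and let $q\sim\mathrm{Ber}(1/L)$ be independent of $(G_{ij})_j$. Define the event $E=\{G>0\}\cup\{G\le 0,\ q=1\}$. Then for every $j\ne i$, $$\mathbb E[G_{ij}\mathbb 1_E]=\Big(1-\frac1L\Big)\mathbb E[G_{ij}\mathbb 1_{\{G>0\}}]+\frac1L\,\mathbb E[G_{ij}].$$ Moreover, let $\epsilon\in[0,1)$, $\tau,\rho>0$, and suppose $\Pr(G\ge\tau)\ge\rho$ and $\mathbb E[G_{ij}]\ge -1$ for all $j\ne i$. If $$L\ge 1+\frac{1-\epsilon}{\tau\rho+\epsilon},$$ then $\mathbb E[G_{ij}\mathbb 1_E]\ge-\epsilon$ for every $j\neq i$.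
   Context: $\mathrm{Ber}(1/L)$ is the Bernoulli distribution with success probability $1/L$; $\mathbb 1_E$ is the indicator of the event $E$. *)

theory Defs
  imports "HOL-Probability.Probability"
begin

definition idx :: "nat \<Rightarrow> nat \<Rightarrow> nat set" where
  "idx K i = {1..K} - {i}"

definition Gmin :: "nat \<Rightarrow> nat \<Rightarrow> (nat \<Rightarrow> 'a \<Rightarrow> real) \<Rightarrow> 'a \<Rightarrow> real" where
  "Gmin K i G \<omega> = Min ((\<lambda>j. G j \<omega>) ` idx K i)"

definition eventE :: "'a measure \<Rightarrow> nat \<Rightarrow> nat \<Rightarrow> (nat \<Rightarrow> 'a \<Rightarrow> real) \<Rightarrow> ('a \<Rightarrow> bool) \<Rightarrow> 'a set" where
  "eventE M K i G q = {\<omega> \<in> space M. Gmin K i G \<omega> > 0 \<or> (Gmin K i G \<omega> \<le> 0 \<and> q \<omega>)}"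

end

theory Submission
  imports Defs
begin

text \<open>Write \<open>E = P \<union> (P\<^sup>c \<inter> Q)\<close> with \<open>P = {G > 0}\<close> and \<open>Q = {q}\<close>. The variable
  \<open>G\<^sub>i\<^sub>j \<one>\<^bsub>P\<^sup>c\<^esub>\<close> is a function of the vector \<open>(G\<^sub>i\<^sub>k)\<^sub>k\<close>, hence independent of \<open>Q\<close>, so
  \<open>E[G\<^sub>i\<^sub>j \<one>\<^sub>E] = E[G\<^sub>i\<^sub>j \<one>\<^sub>P] + E[G\<^sub>i\<^sub>j \<one>\<^bsub>P\<^sup>c\<^esub>] / L\<close>, which rearranges to the identity.
  For the bound, \<open>G\<^sub>i\<^sub>j \<ge> G\<close> gives \<open>E[G\<^sub>i\<^sub>j \<one>\<^sub>P] \<ge> \<tau> Pr(G \<ge> \<tau>) \<ge> \<tau>\<rho>\<close>, and the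
  hypothesis on \<open>L\<close> is exactly \<open>(1 - 1/L) \<tau>\<rho> - 1/L \<ge> -\<epsilon>\<close>.\<close>

lemma (in prob_space) indep_var_iff_indep_set:
  "indep_var S X T Y \<longleftrightarrow> random_variable S X \<and> random_variable T Y \<and>
     indep_set {X -` A \<inter> space M | A. A \<in> sets S} {Y -` B \<inter> space M | B. B \<in> sets T}"
proof -
  have "(\<lambda>b. {case_bool X Y b -` A \<inter> space M | A. A \<in> sets (case_bool S T b)})
      = case_bool {X -` A \<inter> space M | A. A \<in> sets S} {Y -` B \<inter> space M | B. B \<in> sets T}"
    by (rule ext) (simp split: bool.split)
  then show ?thesis
    unfolding indep_var_def indep_vars_def2 indep_set_def by (auto simp: all_bool_eq)
qed

lemma (in prob_space) indep_var_compose_of_indep_set: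
  assumes indep: "indep_set {X -` A \<inter> space M | A. A \<in> sets N} {Y -` B \<inter> space M | B. B \<in> sets N'}"
    and X: "X \<in> measurable M N" and Y: "Y \<in> measurable M N'"
    and f: "f \<in> measurable N S" and g: "g \<in> measurable N' S"
  shows "indep_var S (f \<circ> X) S (g \<circ> Y)"
proof -
  have X_sub: "{(f \<circ> X) -` A \<inter> space M | A. A \<in> sets S} \<subseteq> {X -` A \<inter> space M | A. A \<in> sets N}"
  proof safe
    fix A assume "A \<in> sets S"
    then have "f -` A \<inter> space N \<in> sets N"
      by (rule measurable_sets[OF f])
    moreover have "(f \<circ> X) -` A \<inter> space M = X -` (f -` A \<inter> space N) \<inter> space M"
      using measurable_space[OF X] by auto
    ultimately show "\<exists>A'. (f \<circ> X) -` A \<inter> space M = X -` A' \<inter> space M \<and> A' \<in> sets N"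
      by blast
  qed
  have Y_sub: "{(g \<circ> Y) -` B \<inter> space M | B. B \<in> sets S} \<subseteq> {Y -` B \<inter> space M | B. B \<in> sets N'}"
  proof safe
    fix B assume "B \<in> sets S"
    then have "g -` B \<inter> space N' \<in> sets N'"
      by (rule measurable_sets[OF g])
    moreover have "(g \<circ> Y) -` B \<inter> space M = Y -` (g -` B \<inter> space N') \<inter> space M"
      using measurable_space[OF Y] by auto
    ultimately show "\<exists>B'. (g \<circ> Y) -` B \<inter> space M = Y -` B' \<inter> space M \<and> B' \<in> sets N'"
      by blast
  qed
  have "indep_set {(f \<circ> X) -` A \<inter> space M | A. A \<in> sets S} {(g \<circ> Y) -` B \<inter> space M | B. B \<in> sets S}"
    using indep X_sub Y_sub unfolding indep_sets2_eq by (meson subsetD order_trans)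
  moreover have "random_variable S (f \<circ> X)" "random_variable S (g \<circ> Y)"
    using X Y f g by auto
  ultimately show ?thesis
    by (simp add: indep_var_iff_indep_set)
qed

lemma (in prob_space) indep_var_cong_on_space:
  assumes "indep_var S X T Y"
    and "\<And>\<omega>. \<omega> \<in> space M \<Longrightarrow> X' \<omega> = X \<omega>" "\<And>\<omega>. \<omega> \<in> space M \<Longrightarrow> Y' \<omega> = Y \<omega>"
  shows "indep_var S X' T Y'"
proof -
  have "X' -` A \<inter> space M = X -` A \<inter> space M" "Y' -` A \<inter> space M = Y -` A \<inter> space M" for A
    using assms(2,3) by auto
  moreover have "random_variable S X'" "random_variable T Y'"
    using assms by (auto simp: indep_var_iff_indep_set cong: measurable_cong)
  ultimately show ?thesis
    using assms(1) by (simp add: indep_var_iff_indep_set)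
qed

lemma (in prob_space) prob_bernoulli_event:
  assumes "q \<in> measurable M (count_space UNIV)"
    and "distr M (count_space UNIV) q = measure_pmf (bernoulli_pmf p)" and "0 \<le> p" "p \<le> 1"
  shows "prob {\<omega> \<in> space M. q \<omega>} = p"
proof -
  have "prob {\<omega> \<in> space M. q \<omega>} = measure (distr M (count_space UNIV) q) {True}"
    using assms(1) by (subst measure_distr) (auto intro!: arg_cong[where f=prob])
  also have "\<dots> = p"
    using assms(2-4) by (simp add: measure_pmf_single)
  finally show ?thesis .
qed

lemma (in prob_space) expectation_mult_indicator_randomized_event:
  fixes X :: "'a \<Rightarrow> real"
  assumes X: "integrable M X" and P: "P \<in> events" and Q: "Q \<in> events"
    and indep: "indep_var borel (\<lambda>\<omega>. X \<omega> * indicator (space M - P) \<omega>) borel (indicator Q)"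
  shows "expectation (\<lambda>\<omega>. X \<omega> * indicator (P \<union> (space M - P) \<inter> Q) \<omega>)
       = (1 - prob Q) * expectation (\<lambda>\<omega>. X \<omega> * indicator P \<omega>) + prob Q * expectation X"
proof -
  define Z where "Z = (\<lambda>\<omega>. X \<omega> * indicator (space M - P) \<omega>)"
  have XP: "integrable M (\<lambda>\<omega>. X \<omega> * indicator P \<omega>)"
    using integrable_mult_indicator[OF P X] by (simp add: mult.commute)
  have Z: "integrable M Z"
    using integrable_mult_indicator[OF _ X, of "space M - P"] P by (auto simp: Z_def mult.commute)
  have IQ: "integrable M (indicator Q :: 'a \<Rightarrow> real)"
    using Q by (simp add: less_top[symmetric])
  have ZQ: "expectation (\<lambda>\<omega>. Z \<omega> * indicator Q \<omega>) = expectation Z * prob Q"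
    using indep_var_lebesgue_integral[OF indep[folded Z_def] Z IQ] Q by simp
  have "expectation (\<lambda>\<omega>. X \<omega> * indicator (P \<union> (space M - P) \<inter> Q) \<omega>)
      = expectation (\<lambda>\<omega>. X \<omega> * indicator P \<omega> + Z \<omega> * indicator Q \<omega>)"
    by (intro Bochner_Integration.integral_cong refl) (auto simp: Z_def indicator_def)
  also have "\<dots> = expectation (\<lambda>\<omega>. X \<omega> * indicator P \<omega>) + expectation Z * prob Q"
    using XP indep_var_integrable[OF indep[folded Z_def] Z IQ] ZQ by simp
  finally have E: "expectation (\<lambda>\<omega>. X \<omega> * indicator (P \<union> (space M - P) \<inter> Q) \<omega>)
      = expectation (\<lambda>\<omega>. X \<omega> * indicator P \<omega>) + expectation Z * prob Q" .
  have "expectation X = expectation (\<lambda>\<omega>. X \<omega> * indicator P \<omega> + Z \<omega>)"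
    by (intro Bochner_Integration.integral_cong refl) (auto simp: Z_def indicator_def)
  also have "\<dots> = expectation (\<lambda>\<omega>. X \<omega> * indicator P \<omega>) + expectation Z"
    using XP Z by simp
  finally show ?thesis
    unfolding E by (simp add: algebra_simps)
qed

lemma (in prob_space) expectation_mult_indicator_pos_ge:
  fixes X Y :: "'a \<Rightarrow> real"
  assumes X: "integrable M X" and Y: "Y \<in> borel_measurable M"
    and le: "\<And>\<omega>. \<omega> \<in> space M \<Longrightarrow> Y \<omega> \<le> X \<omega>" and "\<tau> > 0"
  shows "\<tau> * prob {\<omega> \<in> space M. Y \<omega> \<ge> \<tau>}
      \<le> expectation (\<lambda>\<omega>. X \<omega> * indicator {\<omega> \<in> space M. Y \<omega> > 0} \<omega>)"
proof -
  define W where "W = {\<omega> \<in> space M. Y \<omega> \<ge> \<tau>}"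
  have W: "W \<in> events" and P: "{\<omega> \<in> space M. Y \<omega> > 0} \<in> events"
    unfolding W_def using Y by measurable
  have "\<tau> * prob W = expectation (\<lambda>\<omega>. \<tau> * indicator W \<omega>)"
    using W by (simp add: less_top[symmetric])
  also have "\<dots> \<le> expectation (\<lambda>\<omega>. X \<omega> * indicator {\<omega> \<in> space M. Y \<omega> > 0} \<omega>)"
  proof (rule integral_mono)
    show "integrable M (\<lambda>\<omega>. X \<omega> * indicator {\<omega> \<in> space M. Y \<omega> > 0} \<omega>)"
      using integrable_mult_indicator[OF P X] by (simp add: mult.commute)
    show "integrable M (\<lambda>\<omega>. \<tau> * indicator W \<omega>)"
      using W by (simp add: less_top[symmetric])
  qed (use le \<open>\<tau> > 0\<close> in \<open>fastforce simp: W_def indicator_def\<close>)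
  finally show ?thesis
    unfolding W_def .
qed

lemma mixture_ge_neg:
  fixes a b c \<epsilon> L :: real
  assumes "c + \<epsilon> > 0" "L \<ge> 1" "a \<ge> c" "b \<ge> -1"
    and L: "L \<ge> 1 + (1 - \<epsilon>) / (c + \<epsilon>)"
  shows "(1 - 1 / L) * a + 1 / L * b \<ge> - \<epsilon>"
proof -
  have "c + 1 = (1 + (1 - \<epsilon>) / (c + \<epsilon>)) * (c + \<epsilon>)"
    using assms(1) by (simp add: field_simps)
  also have "\<dots> \<le> L * (c + \<epsilon>)"
    using assms(1) L by (intro mult_right_mono) auto
  finally have "- \<epsilon> * L \<le> L * c - c - 1"
    by (simp add: algebra_simps)
  then have "- \<epsilon> \<le> (L * c - c - 1) / L"
    using assms(2) by (simp add: pos_le_divide_eq)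
  also have "\<dots> = (1 - 1 / L) * c + 1 / L * (-1)"
    using assms(2) by (simp add: field_simps)
  also have "\<dots> \<le> (1 - 1 / L) * a + 1 / L * b"
    using assms(2-4) by (intro add_mono mult_left_mono) auto
  finally show ?thesis .
qed

lemma finite_idx: "finite (idx K i)"
  by (simp add: idx_def)

lemma idx_nonempty:
  assumes "K \<ge> 2"
  shows "idx K i \<noteq> {}"
proof -
  have "(if i = 1 then 2 else 1) \<in> idx K i"
    using assms by (auto simp: idx_def)
  then show ?thesis
    by blast
qed

lemma Gmin_le: "j \<in> idx K i \<Longrightarrow> Gmin K i G \<omega> \<le> G j \<omega>"
  by (simp add: Gmin_def finite_idx)

lemma Gmin_le_iff: "K \<ge> 2 \<Longrightarrow> Gmin K i G \<omega> \<le> t \<longleftrightarrow> (\<exists>j \<in> idx K i. G j \<omega> \<le> t)"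
  by (simp add: Gmin_def finite_idx idx_nonempty Min_le_iff)

lemma borel_measurable_Gmin:
  "(\<And>j. j \<in> idx K i \<Longrightarrow> G j \<in> borel_measurable M) \<Longrightarrow> Gmin K i G \<in> borel_measurable M"
  unfolding Gmin_def[abs_def] by (intro borel_measurable_Min finite_idx)

lemma (in prob_space) indep_var_Gmin_nonpos_bernoulli:
  fixes G :: "nat \<Rightarrow> 'a \<Rightarrow> real"
  assumes "K \<ge> 2" and j: "j \<in> idx K i"
    and G: "\<And>k. k \<in> idx K i \<Longrightarrow> G k \<in> borel_measurable M"
    and q: "q \<in> measurable M (count_space UNIV)"
    and indep: "indep_set
           {(\<lambda>\<omega>. restrict (\<lambda>k. G k \<omega>) (idx K i)) -` A \<inter> space M | A. A \<in> sets (PiM (idx K i) (\<lambda>_. borel))}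
           {q -` B \<inter> space M | B. B \<in> sets (count_space UNIV)}"
  shows "indep_var
           borel (\<lambda>\<omega>. G j \<omega> * indicator {\<omega> \<in> space M. Gmin K i G \<omega> \<le> 0} \<omega>)
           borel (indicator {\<omega> \<in> space M. q \<omega>})"
proof -
  let ?I = "idx K i"
  define R where "R = (\<lambda>\<omega>. restrict (\<lambda>k. G k \<omega>) ?I)"
  define f :: "(nat \<Rightarrow> real) \<Rightarrow> real" where "f = (\<lambda>x. if \<exists>k \<in> ?I. x k \<le> 0 then x j else 0)"
  define g :: "bool \<Rightarrow> real" where "g = (\<lambda>b. if b then 1 else 0)"
  have "R \<in> measurable M (PiM ?I (\<lambda>_. borel))"
    unfolding R_def using G by (intro measurable_restrict) auto
  moreover have "f \<in> borel_measurable (PiM ?I (\<lambda>_. borel))"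
    unfolding f_def using j finite_idx by measurable
  moreover have "g \<in> borel_measurable (count_space UNIV)"
    by simp
  ultimately have "indep_var borel (f \<circ> R) borel (g \<circ> q)"
    using indep q unfolding R_def by (intro indep_var_compose_of_indep_set)
  then show ?thesis
    by (rule indep_var_cong_on_space)
       (use j \<open>K \<ge> 2\<close> in \<open>auto simp: f_def g_def R_def Gmin_le_iff indicator_def\<close>)
qed

lemma (in prob_space) expectation_indicator_eventE:
  fixes G :: "nat \<Rightarrow> 'a \<Rightarrow> real"
  assumes "K \<ge> 2" and j: "j \<in> idx K i"
    and G: "\<And>k. k \<in> idx K i \<Longrightarrow> integrable M (G k)"
    and "L \<ge> 1"
    and q: "q \<in> measurable M (count_space UNIV)"
    and q_distr: "distr M (count_space UNIV) q = measure_pmf (bernoulli_pmf (1 / L))"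
    and indep: "indep_set
           {(\<lambda>\<omega>. restrict (\<lambda>k. G k \<omega>) (idx K i)) -` A \<inter> space M | A. A \<in> sets (PiM (idx K i) (\<lambda>_. borel))}
           {q -` B \<inter> space M | B. B \<in> sets (count_space UNIV)}"
  shows "expectation (\<lambda>\<omega>. G j \<omega> * indicator (eventE M K i G q) \<omega>)
       = (1 - 1 / L) * expectation (\<lambda>\<omega>. G j \<omega> * indicator {\<omega> \<in> space M. Gmin K i G \<omega> > 0} \<omega>)
         + 1 / L * expectation (G j)"
proof -
  define P where "P = {\<omega> \<in> space M. Gmin K i G \<omega> > 0}"
  define Q where "Q = {\<omega> \<in> space M. q \<omega>}"
  have G_meas: "\<And>k. k \<in> idx K i \<Longrightarrow> G k \<in> borel_measurable M"
    using G by blast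
  have P: "P \<in> events"
    unfolding P_def using borel_measurable_Gmin[OF G_meas] by measurable
  have Q: "Q \<in> events"
    unfolding Q_def using q by measurable
  have "prob Q = 1 / L"
    unfolding Q_def using q q_distr \<open>L \<ge> 1\<close> by (intro prob_bernoulli_event) auto
  moreover have "eventE M K i G q = P \<union> (space M - P) \<inter> Q"
    unfolding eventE_def P_def Q_def by auto
  moreover have "space M - P = {\<omega> \<in> space M. Gmin K i G \<omega> \<le> 0}"
    unfolding P_def by auto
  moreover have "indep_var borel (\<lambda>\<omega>. G j \<omega> * indicator (space M - P) \<omega>) borel (indicator Q)"
    unfolding calculation(3) Q_def
    using assms(1) j G_meas q indep by (rule indep_var_Gmin_nonpos_bernoulli)
  ultimately show ?thesis
    using expectation_mult_indicator_randomized_event[OF G[OF j] P Q] by (simp add: P_def)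
qed

theorem mainTheorem8:
  fixes M :: "'a measure" and K i :: nat and G :: "nat \<Rightarrow> 'a \<Rightarrow> real"
    and q :: "'a \<Rightarrow> bool" and L :: real
  assumes "prob_space M"
    and "K \<ge> 2" and "i \<in> {1..K}"
    and "\<And>j. j \<in> idx K i \<Longrightarrow> integrable M (G j)"
    and "L \<ge> 1"
    and "q \<in> measurable M (count_space UNIV)"
    and "distr M (count_space UNIV) q = measure_pmf (bernoulli_pmf (1 / L))"
    and "prob_space.indep_set M
           {(\<lambda>\<omega>. restrict (\<lambda>j. G j \<omega>) (idx K i)) -` A \<inter> space M | A. A \<in> sets (PiM (idx K i) (\<lambda>_. borel))}
           {q -` B \<inter> space M | B. B \<in> sets (count_space UNIV)}"
  shows "(\<forall>j \<in> idx K i.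
            prob_space.expectation M (\<lambda>\<omega>. G j \<omega> * indicator (eventE M K i G q) \<omega>)
            = (1 - 1 / L) * prob_space.expectation M
                 (\<lambda>\<omega>. G j \<omega> * indicator {\<omega> \<in> space M. Gmin K i G \<omega> > 0} \<omega>)
              + 1 / L * prob_space.expectation M (G j))
       \<and> (\<forall>\<epsilon> \<tau> \<rho> :: real.
            0 \<le> \<epsilon> \<and> \<epsilon> < 1 \<and> \<tau> > 0 \<and> \<rho> > 0
            \<and> measure M {\<omega> \<in> space M. Gmin K i G \<omega> \<ge> \<tau>} \<ge> \<rho>
            \<and> (\<forall>j \<in> idx K i. prob_space.expectation M (G j) \<ge> -1)
            \<and> L \<ge> 1 + (1 - \<epsilon>) / (\<tau> * \<rho> + \<epsilon>)
            \<longrightarrow> (\<forall>j \<in> idx K i.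
                   prob_space.expectation M (\<lambda>\<omega>. G j \<omega> * indicator (eventE M K i G q) \<omega>) \<ge> - \<epsilon>))"
proof -
  interpret prob_space M by fact
  have identity: "expectation (\<lambda>\<omega>. G j \<omega> * indicator (eventE M K i G q) \<omega>)
       = (1 - 1 / L) * expectation (\<lambda>\<omega>. G j \<omega> * indicator {\<omega> \<in> space M. Gmin K i G \<omega> > 0} \<omega>)
         + 1 / L * expectation (G j)" if "j \<in> idx K i" for j
    using assms that by (intro expectation_indicator_eventE) auto
  show ?thesis
  proof (intro conjI ballI allI impI identity)
    fix \<epsilon> \<tau> \<rho> :: real and j
    assume H: "0 \<le> \<epsilon> \<and> \<epsilon> < 1 \<and> \<tau> > 0 \<and> \<rho> > 0
            \<and> measure M {\<omega> \<in> space M. Gmin K i G \<omega> \<ge> \<tau>} \<ge> \<rho>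
            \<and> (\<forall>j \<in> idx K i. expectation (G j) \<ge> -1)
            \<and> L \<ge> 1 + (1 - \<epsilon>) / (\<tau> * \<rho> + \<epsilon>)" and j: "j \<in> idx K i"
    have "\<tau> * \<rho> \<le> \<tau> * prob {\<omega> \<in> space M. Gmin K i G \<omega> \<ge> \<tau>}"
      using H by (intro mult_left_mono) auto
    also have "\<dots> \<le> expectation (\<lambda>\<omega>. G j \<omega> * indicator {\<omega> \<in> space M. Gmin K i G \<omega> > 0} \<omega>)"
      using assms(4) j H
      by (intro expectation_mult_indicator_pos_ge borel_measurable_Gmin Gmin_le) auto
    finally show "expectation (\<lambda>\<omega>. G j \<omega> * indicator (eventE M K i G q) \<omega>) \<ge> - \<epsilon>"
      unfolding identity[OF j] using H j assms(5)
      by (intro mixture_ge_neg[where c = "\<tau> * \<rho>"]) (auto intro: add_pos_nonneg)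
  qed
qed

end
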